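(* Let $k=k(n)$ be integers with $0\le k(n)<n$, where $k(n)$ is either bounded or tends to infinity. Then $$\lim_{n\to\infty}\frac{\|\binom nk\chi_R^{(n)}\|}{\|\chi_{\beta_{X_n^k}}\|}=\lim_{n\to\infty}\frac{\|2^n\chi_R^{(n)}\|}{\|\chi_{\beta_{B_n}}\|}=1,$$ $$\lim_{n\to\infty}\frac{\langle\chi_R^{(n)},\chi_{\beta_{X_n^k}}\rangle}{\|\chi_R^{(n)}\|\cdot\|\chi_{\beta_{X_n^k}}\|}=\lim_{n\to\infty}\frac{\langle\chi_R^{(n)},\chi_{\beta_{B_n}}\rangle}{\|\chi_R^{(n)}\|\cdot\|\chi_{\beta_{B_n}}\|}=1 .$$
   Context: $B_n$ is the group of $n\times n$ monomial matrices with nonzero entries in $\{\pm1\}$; $S_n\le B_n$ via permutation matrices. $X_n^k$ is the set of matrices in $B_n$ with exactly $k$ entries equal to $-1$. $\chi_{\beta_{X_n^k}}$ (resp. $\chi_{\beta_{B_n}}$) is the character of the permutation representation of $S_n$ on $X_n^k$ (resp. $B_n$) given by $\pi\circ A=\pi A\pi^{-1}$. $\chi_R^{(n)}$ is the regular character of $S_n$; $\langle\chi_1,\chi_2\rangle=\frac1{n!}\sum_{\pi\in S_n}\chi_1(\pi)\overline{\chi_2(\pi)}$ and $\|\chi\|=\langle\chi,\chi\rangle^{1/2}$. *)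

theory Defs
  imports Complex_Main "HOL-Combinatorics.Permutations"
begin

text \<open>n x n integer matrices are represented as functions nat => nat => int,
  with all entries outside the index range {..<n} x {..<n} equal to 0.\<close>

definition mat_mult :: "nat \<Rightarrow> (nat \<Rightarrow> nat \<Rightarrow> int) \<Rightarrow> (nat \<Rightarrow> nat \<Rightarrow> int) \<Rightarrow> (nat \<Rightarrow> nat \<Rightarrow> int)" where
  "mat_mult n A B = (\<lambda>i j. \<Sum>l<n. A i l * B l j)"

definition perm_mat :: "nat \<Rightarrow> (nat \<Rightarrow> nat) \<Rightarrow> (nat \<Rightarrow> nat \<Rightarrow> int)" where
  "perm_mat n \<pi> = (\<lambda>i j. if i < n \<and> j < n \<and> i = \<pi> j then 1 else 0)"

definition Bn :: "nat \<Rightarrow> (nat \<Rightarrow> nat \<Rightarrow> int) set" where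
  "Bn n = {A. (\<forall>i j. (n \<le> i \<or> n \<le> j) \<longrightarrow> A i j = 0)
             \<and> (\<forall>i j. A i j \<in> {-1, 0, 1})
             \<and> (\<forall>i<n. \<exists>!j. j < n \<and> A i j \<noteq> 0)
             \<and> (\<forall>j<n. \<exists>!i. i < n \<and> A i j \<noteq> 0)}"

definition Xnk :: "nat \<Rightarrow> nat \<Rightarrow> (nat \<Rightarrow> nat \<Rightarrow> int) set" where
  "Xnk n k = {A \<in> Bn n. card {(i, j). i < n \<and> j < n \<and> A i j = -1} = k}"

text \<open>Conjugation action pi o A = P_pi A P_pi^{-1} (P_pi^{-1} = P_{pi^{-1}}).\<close>
definition conj_act :: "nat \<Rightarrow> (nat \<Rightarrow> nat) \<Rightarrow> (nat \<Rightarrow> nat \<Rightarrow> int) \<Rightarrow> (nat \<Rightarrow> nat \<Rightarrow> int)" where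
  "conj_act n \<pi> A = mat_mult n (mat_mult n (perm_mat n \<pi>) A) (perm_mat n (inv \<pi>))"

definition perm_char :: "nat \<Rightarrow> (nat \<Rightarrow> nat \<Rightarrow> int) set \<Rightarrow> (nat \<Rightarrow> nat) \<Rightarrow> real" where
  "perm_char n Y \<pi> = real (card {A \<in> Y. conj_act n \<pi> A = A})"

definition reg_char :: "nat \<Rightarrow> (nat \<Rightarrow> nat) \<Rightarrow> real" where
  "reg_char n \<pi> = (if \<pi> = id then fact n else 0)"

definition char_inner :: "nat \<Rightarrow> ((nat \<Rightarrow> nat) \<Rightarrow> real) \<Rightarrow> ((nat \<Rightarrow> nat) \<Rightarrow> real) \<Rightarrow> real" where
  "char_inner n f g = (\<Sum>\<pi> | \<pi> permutes {..<n}. f \<pi> * g \<pi>) / fact n"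

definition char_norm :: "nat \<Rightarrow> ((nat \<Rightarrow> nat) \<Rightarrow> real) \<Rightarrow> real" where
  "char_norm n f = sqrt (char_inner n f f)"

end

theory Submission
  imports Defs "HOL-Combinatorics.Orbits"
begin

text \<open>
  An element of \<open>B\<^sub>n\<close> is a signed permutation matrix, given by a permutation \<open>s\<close> and the set
  \<open>E\<close> of columns whose entry is \<open>-1\<close>, and conjugation by \<open>\<pi>\<close> fixes it only if \<open>\<pi>\<close> commutes
  with \<open>s\<close>. Hence the permutation character \<open>\<chi>\<close> of \<open>X\<^sub>n\<^sup>k\<close> or of \<open>B\<^sub>n\<close> satisfies
  \<open>\<chi>(id) = n! c\<close> and \<open>\<chi>(\<pi>) \<le> c |C(\<pi>)|\<close>, where \<open>c\<close> is the number of admissible sets \<open>E\<close>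
  and \<open>C(\<pi>)\<close> is the centraliser of \<open>\<pi>\<close> in \<open>S\<^sub>n\<close>. Both ratios of the theorem equal
  \<open>1 / sqrt (1 + \<delta>)\<close> with \<open>\<delta> = (\<Sum>\<pi> \<noteq> id. \<chi>(\<pi>)\<^sup>2) / \<chi>(id)\<^sup>2\<close>, so it suffices that
  \<open>(\<Sum>\<pi> \<noteq> id. |C(\<pi>)|\<^sup>2) / n!\<^sup>2\<close> tends to \<open>0\<close>.

  A permutation \<open>\<pi>\<close> with support \<open>S\<close> is a derangement of \<open>S\<close>, and \<open>|C(\<pi>)|\<close> is at most
  \<open>(n - |S|)!\<close> times the order of its centraliser in the permutations of \<open>S\<close>. Let \<open>D(S)\<close> be
  the sum of the squared centraliser orders of the derangements of \<open>S\<close>. Fixing \<open>x \<in> S\<close>, a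
  derangement is determined by its cycle through \<open>x\<close> and its restriction to the remaining
  points, and by orbit--stabiliser removing that cycle shrinks the centraliser by a factor at
  most \<open>|S|\<close>. This gives \<open>D(S) \<le> |S|\<^sup>2 (|S| - 1)! (\<Sum>i < |S| - 1. i!)\<close>, hence
  \<open>D(S) \<le> |S|!\<^sup>2\<close> by induction and then \<open>D(S) \<le> 2 |S|!\<^sup>2 / (|S| - 1)\<close>. Summing over \<open>S\<close>
  bounds \<open>\<Sum>\<pi> \<noteq> id. |C(\<pi>)|\<^sup>2\<close> by \<open>10 n!\<^sup>2 / (n - 1)\<close>.
\<close>

section \<open>Centralisers of permutations\<close>

definition centralizer :: "'a set \<Rightarrow> ('a \<Rightarrow> 'a) \<Rightarrow> ('a \<Rightarrow> 'a) set" where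
  "centralizer S p = {s. s permutes S \<and> s \<circ> p = p \<circ> s}"

lemma finite_centralizer: "finite S \<Longrightarrow> finite (centralizer S p)"
  by (rule finite_subset[OF _ finite_permutations[of S]]) (auto simp: centralizer_def)

lemma commute_funpow_apply: "s \<circ> d = d \<circ> s \<Longrightarrow> s ((d ^^ n) y) = (d ^^ n) (s y)"
  by (induction n) (auto simp: fun_eq_iff)

lemma comp_in_centralizer:
  "s \<in> centralizer S p \<Longrightarrow> t \<in> centralizer S p \<Longrightarrow> s \<circ> t \<in> centralizer S p"
  by (auto simp: centralizer_def permutes_compose) (metis comp_assoc)

lemma inv_in_centralizer:
  assumes "s \<in> centralizer S p"
  shows "inv s \<in> centralizer S p"
proof -
  have s: "s permutes S" and sp: "s \<circ> p = p \<circ> s" using assms by (auto simp: centralizer_def)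
  have "inv s \<circ> p = inv s \<circ> p \<circ> (s \<circ> inv s)" using permutes_inv_o(1)[OF s] by simp
  also have "\<dots> = inv s \<circ> (s \<circ> p) \<circ> inv s" using sp by (metis comp_assoc)
  also have "\<dots> = p \<circ> inv s" using permutes_inv_o(2)[OF s] by (metis comp_assoc id_comp)
  finally show ?thesis using permutes_inv[OF s] by (simp add: centralizer_def)
qed

lemma centralizer_stabilizer_subset:
  assumes "finite S" and "d permutes S"
  shows "{s \<in> centralizer S d. s x = x}
    \<subseteq> centralizer (S - orbit d x) (perm_restrict d (S - orbit d x))"
proof
  let ?R = "S - orbit d x"
  fix s assume "s \<in> {s \<in> centralizer S d. s x = x}"
  hence s: "s permutes S" and sd: "s \<circ> d = d \<circ> s" and sx: "s x = x"
    by (auto simp: centralizer_def)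
  have fixes_orbit: "s y = y" if y: "y \<in> orbit d x" for y
  proof -
    have "permutation d" using assms permutation_permutes by blast
    then obtain n where "y = (d ^^ n) x"
      using y unfolding orbit_altdef_permutation[OF \<open>permutation d\<close>] by blast
    thus ?thesis using commute_funpow_apply[OF sd] sx by simp
  qed
  have "s y = y" if "y \<notin> ?R" for y
    using that fixes_orbit permutes_not_in[OF s] by blast
  hence sR: "s permutes ?R" using s by (auto simp: permutes_def)
  have sd_apply: "s (d y) = d (s y)" for y using sd by (metis comp_apply)
  have "s \<circ> perm_restrict d ?R = perm_restrict d ?R \<circ> s"
  proof
    fix y
    show "(s \<circ> perm_restrict d ?R) y = (perm_restrict d ?R \<circ> s) y"
    proof (cases "y \<in> ?R")
      case True
      hence "s y \<in> ?R" using permutes_in_image[OF sR] by simp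
      thus ?thesis using True by (simp add: perm_restrict_simps sd_apply)
    next
      case False
      thus ?thesis using permutes_not_in[OF sR False] by (simp add: perm_restrict_simps)
    qed
  qed
  thus "s \<in> centralizer ?R (perm_restrict d ?R)" using sR by (simp add: centralizer_def)
qed

lemma card_centralizer_fibre_le:
  assumes "finite S"
  shows "card {s \<in> centralizer S d. s x = y} \<le> card {s \<in> centralizer S d. s x = x}"
proof (cases "{s \<in> centralizer S d. s x = y} = {}")
  case True
  thus ?thesis by (metis card.empty le0)
next
  case False
  then obtain s0 where s0: "s0 \<in> centralizer S d" "s0 x = y" by auto
  have s0p: "s0 permutes S" using s0 by (simp add: centralizer_def)
  have "inj_on ((\<circ>) (inv s0)) {s \<in> centralizer S d. s x = y}"
    by (rule inj_onI) (metis permutes_inv_o(1)[OF s0p] comp_assoc id_comp)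
  moreover have "(\<circ>) (inv s0) ` {s \<in> centralizer S d. s x = y} \<subseteq> {s \<in> centralizer S d. s x = x}"
    using s0 permutes_inverses(2)[OF s0p] by (auto intro: comp_in_centralizer inv_in_centralizer)
  moreover have "finite {s \<in> centralizer S d. s x = x}" using finite_centralizer[OF assms] by simp
  ultimately show ?thesis by (rule card_inj_on_le)
qed

lemma card_centralizer_le_orbit:
  assumes "finite S" and "d permutes S" and "x \<in> S"
  shows "card (centralizer S d)
    \<le> card S * card (centralizer (S - orbit d x) (perm_restrict d (S - orbit d x)))"
proof -
  let ?C = "centralizer S d"
  have "?C = (\<Union>y\<in>S. {s \<in> ?C. s x = y})"
    using assms(3) by (auto simp: centralizer_def permutes_in_image)
  hence "card ?C = card (\<Union>y\<in>S. {s \<in> ?C. s x = y})" by (rule arg_cong)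
  also have "\<dots> \<le> (\<Sum>y\<in>S. card {s \<in> ?C. s x = y})"
    by (rule card_UN_le[OF assms(1)])
  also have "\<dots> \<le> (\<Sum>y\<in>S. card {s \<in> ?C. s x = x})"
    by (rule sum_mono) (rule card_centralizer_fibre_le[OF assms(1)])
  also have "\<dots> = card S * card {s \<in> ?C. s x = x}" by simp
  also have "\<dots> \<le> card S * card (centralizer (S - orbit d x) (perm_restrict d (S - orbit d x)))"
  proof (rule mult_le_mono2, rule card_mono)
    show "finite (centralizer (S - orbit d x) (perm_restrict d (S - orbit d x)))"
      using assms(1) by (simp add: finite_centralizer)
    show "{s \<in> ?C. s x = x} \<subseteq> centralizer (S - orbit d x) (perm_restrict d (S - orbit d x))"
      by (rule centralizer_stabilizer_subset[OF assms(1,2)])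
  qed
  finally show ?thesis .
qed

section \<open>Derangements\<close>

definition derangements :: "'a set \<Rightarrow> ('a \<Rightarrow> 'a) set" where
  "derangements S = {d. d permutes S \<and> (\<forall>x\<in>S. d x \<noteq> x)}"

definition derangement_centralizer_sum :: "'a set \<Rightarrow> nat" where
  "derangement_centralizer_sum S = (\<Sum>d\<in>derangements S. card (centralizer S d) ^ 2)"

lemma finite_derangements: "finite S \<Longrightarrow> finite (derangements S)"
  by (rule finite_subset[OF _ finite_permutations[of S]]) (auto simp: derangements_def)

definition cycle_tail :: "('a \<Rightarrow> 'a) \<Rightarrow> 'a \<Rightarrow> 'a list" where
  "cycle_tail d x = map (\<lambda>i. (d ^^ i) x) [1..<funpow_dist1 d x x]"

lemma length_cycle_tail: "length (cycle_tail d x) = funpow_dist1 d x x - 1"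
  by (simp add: cycle_tail_def)

lemma Cons_cycle_tail: "x # cycle_tail d x = map (\<lambda>i. (d ^^ i) x) [0..<funpow_dist1 d x x]"
  unfolding cycle_tail_def by (subst upt_conv_Cons) simp_all

lemma orbit_eq_insert_cycle_tail:
  assumes "permutation d"
  shows "orbit d x = insert x (set (cycle_tail d x))"
proof -
  have "orbit d x = set (x # cycle_tail d x)"
    unfolding Cons_cycle_tail set_map set_upt
    by (rule orbit_conv_funpow_dist1[OF permutation_self_in_orbit[OF assms, of x]])
  thus ?thesis by simp
qed

lemma distinct_Cons_cycle_tail:
  assumes "permutation d"
  shows "distinct (x # cycle_tail d x)"
  unfolding Cons_cycle_tail distinct_map
  using inj_on_funpow_dist1[OF permutation_self_in_orbit[OF assms, of x]]
  by (simp only: distinct_upt set_upt simp_thms)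

lemma cycle_tail_nonempty:
  assumes "permutation d" and "d x \<noteq> x"
  shows "cycle_tail d x \<noteq> []"
proof
  assume "cycle_tail d x = []"
  hence "funpow_dist1 d x x = 1" using length_cycle_tail[of d x] by simp
  thus False using funpow_dist1_prop[OF permutation_self_in_orbit[OF assms(1), of x]] assms(2) by simp
qed

lemma funpow_eq_if_cycle_tail_eq:
  assumes "permutation d1" and "permutation d2" and tail: "cycle_tail d1 x = cycle_tail d2 x"
    and "i \<le> funpow_dist1 d1 x x"
  shows "(d1 ^^ i) x = (d2 ^^ i) x"
proof -
  define l where "l = funpow_dist1 d1 x x"
  have l2: "funpow_dist1 d2 x x = l"
    using arg_cong[OF tail, of length] by (simp add: length_cycle_tail l_def)
  show ?thesis
  proof (cases "i = l")
    case True
    thus ?thesis using funpow_dist1_prop[OF permutation_self_in_orbit[OF assms(1), of x]]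
        funpow_dist1_prop[OF permutation_self_in_orbit[OF assms(2), of x]] l2 l_def by simp
  next
    case False
    have "map (\<lambda>i. (d1 ^^ i) x) [0..<l] = map (\<lambda>i. (d2 ^^ i) x) [0..<l]"
      using tail Cons_cycle_tail[of x d1] Cons_cycle_tail[of x d2] l2 l_def by simp
    moreover have "i < l" using False assms(4) by (simp add: l_def)
    ultimately show ?thesis by (simp add: map_eq_conv)
  qed
qed

lemma inj_on_cycle_tail_perm_restrict:
  assumes "finite S"
  shows "inj_on (\<lambda>d. (cycle_tail d x, perm_restrict d (S - orbit d x))) {d. d permutes S}"
proof (rule inj_onI)
  fix d1 d2
  assume "d1 \<in> {d. d permutes S}" and "d2 \<in> {d. d permutes S}"
    and eq: "(cycle_tail d1 x, perm_restrict d1 (S - orbit d1 x))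
      = (cycle_tail d2 x, perm_restrict d2 (S - orbit d2 x))"
  hence d1: "d1 permutes S" and d2: "d2 permutes S"
    and tail: "cycle_tail d1 x = cycle_tail d2 x"
    and rest: "perm_restrict d1 (S - orbit d1 x) = perm_restrict d2 (S - orbit d2 x)"
    by auto
  have p1: "permutation d1" and p2: "permutation d2"
    using d1 d2 assms permutation_permutes by blast+
  have orbits: "orbit d1 x = orbit d2 x"
    using tail by (simp add: orbit_eq_insert_cycle_tail p1 p2)
  show "d1 = d2"
  proof
    fix y
    show "d1 y = d2 y"
    proof (cases "y \<in> orbit d1 x")
      case True
      then obtain i where i: "i < funpow_dist1 d1 x x" "y = (d1 ^^ i) x"
        using orbit_conv_funpow_dist1[OF permutation_self_in_orbit[OF p1, of x]] by auto
      have "d1 y = (d1 ^^ Suc i) x" using i by simp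
      also have "\<dots> = (d2 ^^ Suc i) x" using i(1) by (intro funpow_eq_if_cycle_tail_eq p1 p2 tail) simp
      also have "\<dots> = d2 y"
        using funpow_eq_if_cycle_tail_eq[OF p1 p2 tail, of i] i by simp
      finally show ?thesis .
    next
      case False
      have "perm_restrict d1 (S - orbit d1 x) y = perm_restrict d2 (S - orbit d2 x) y"
        using rest by simp
      thus ?thesis using False orbits permutes_not_in[OF d1] permutes_not_in[OF d2]
        by (cases "y \<in> S") (simp_all add: perm_restrict_simps)
    qed
  qed
qed

lemma derangement_cycle_decomposition:
  assumes "finite S" and "d \<in> derangements S" and "x \<in> S"
  shows "cycle_tail d x \<noteq> []" and "distinct (cycle_tail d x)" and "set (cycle_tail d x) \<subseteq> S - {x}"
    and "perm_restrict d (S - orbit d x) \<in> derangements (S - insert x (set (cycle_tail d x)))"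
proof -
  have d: "d permutes S" and fixfree: "\<forall>y\<in>S. d y \<noteq> y"
    using assms(2) by (auto simp: derangements_def)
  have "permutation d" using d assms(1) permutation_permutes by blast
  hence orbit: "orbit d x = insert x (set (cycle_tail d x))" by (rule orbit_eq_insert_cycle_tail)
  show "cycle_tail d x \<noteq> []"
    using cycle_tail_nonempty[OF \<open>permutation d\<close>] fixfree assms(3) by blast
  show "distinct (cycle_tail d x)" and "set (cycle_tail d x) \<subseteq> S - {x}"
    using distinct_Cons_cycle_tail[OF \<open>permutation d\<close>, of x] permutes_orbit_subset[OF d assms(3)]
    by (auto simp: orbit)
  have "perm_restrict d (S - orbit d x) permutes (S - orbit d x)"
    by (rule perm_restrict_diff_cyclic[OF d cyclic_on_orbit[OF d assms(1)]])
  thus "perm_restrict d (S - orbit d x) \<in> derangements (S - insert x (set (cycle_tail d x)))"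
    using fixfree by (auto simp: orbit derangements_def perm_restrict_simps)
qed

lemma derangement_centralizer_sum_le_cycle_sum:
  assumes "finite S" and "x \<in> S"
  shows "derangement_centralizer_sum S
    \<le> (\<Sum>L | L \<noteq> [] \<and> distinct L \<and> set L \<subseteq> S - {x}.
          card S ^ 2 * derangement_centralizer_sum (S - insert x (set L)))"
proof -
  define Lists where "Lists = {L. L \<noteq> [] \<and> distinct L \<and> set L \<subseteq> S - {x}}"
  define rest where "rest L = S - insert x (set L)" for L
  define key where "key d = (cycle_tail d x, perm_restrict d (S - orbit d x))" for d
  define h where "h = (\<lambda>(L, d'). card S ^ 2 * card (centralizer (rest L) d') ^ 2)"
  have "finite Lists"
    by (rule finite_subset[OF _ finite_subset_distinct[of "S - {x}"]]) (auto simp: Lists_def assms(1))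
  have orbit: "S - orbit d x = rest (cycle_tail d x)" if "d \<in> derangements S" for d
    using that assms(1) orbit_eq_insert_cycle_tail[of d x] permutation_permutes
    by (auto simp: derangements_def rest_def)
  have "derangement_centralizer_sum S \<le> (\<Sum>d\<in>derangements S. h (key d))"
    unfolding derangement_centralizer_sum_def
  proof (rule sum_mono)
    fix d assume d: "d \<in> derangements S"
    hence "card (centralizer S d)
        \<le> card S * card (centralizer (S - orbit d x) (perm_restrict d (S - orbit d x)))"
      using card_centralizer_le_orbit[OF assms(1) _ assms(2)] by (simp add: derangements_def)
    hence "card (centralizer S d) ^ 2
        \<le> (card S * card (centralizer (S - orbit d x) (perm_restrict d (S - orbit d x)))) ^ 2"
      by (rule power_mono) simp
    thus "card (centralizer S d) ^ 2 \<le> h (key d)"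
      using orbit[OF d] by (simp add: h_def key_def power_mult_distrib)
  qed
  also have "\<dots> = (\<Sum>q\<in>key ` derangements S. h q)"
  proof -
    have "inj_on key (derangements S)"
      unfolding key_def[abs_def]
      by (rule inj_on_subset[OF inj_on_cycle_tail_perm_restrict[OF assms(1)]])
         (auto simp: derangements_def)
    thus ?thesis by (simp add: sum.reindex)
  qed
  also have "\<dots> \<le> (\<Sum>q\<in>Sigma Lists (\<lambda>L. derangements (rest L)). h q)"
  proof (rule sum_mono2)
    show "finite (Sigma Lists (\<lambda>L. derangements (rest L)))"
      using \<open>finite Lists\<close> assms(1) by (auto simp: rest_def intro: finite_derangements)
    show "key ` derangements S \<subseteq> Sigma Lists (\<lambda>L. derangements (rest L))"
      using derangement_cycle_decomposition[OF assms(1) _ assms(2)]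
      by (auto simp: key_def Lists_def rest_def)
  qed simp
  also have "\<dots> = (\<Sum>L\<in>Lists. \<Sum>d'\<in>derangements (rest L).
      card S ^ 2 * card (centralizer (rest L) d') ^ 2)"
    unfolding h_def using \<open>finite Lists\<close> assms(1)
    by (subst sum.Sigma) (auto simp: rest_def intro: finite_derangements)
  also have "\<dots> = (\<Sum>L\<in>Lists. card S ^ 2 * derangement_centralizer_sum (rest L))"
    by (simp add: derangement_centralizer_sum_def sum_distrib_left)
  finally show ?thesis by (simp add: Lists_def rest_def)
qed

lemma sum_fact_sq_distinct_lists:
  assumes "finite A"
  shows "(\<Sum>L | L \<noteq> [] \<and> distinct L \<and> set L \<subseteq> A. fact (card A - length L) ^ 2 :: nat)
    = fact (card A) * (\<Sum>i<card A. fact i)"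
proof -
  define N where "N = card A"
  define Lists where "Lists = {L. L \<noteq> [] \<and> distinct L \<and> set L \<subseteq> A}"
  have length_le: "length L \<le> N" if "L \<in> Lists" for L
    using that assms by (auto simp: Lists_def N_def distinct_card[symmetric] intro!: card_mono)
  have "finite Lists"
    by (rule finite_subset[OF _ finite_subset_distinct[OF assms]]) (auto simp: Lists_def)
  have "length ` Lists \<subseteq> {1..N}"
    using length_le by (auto simp: Lists_def Suc_le_eq)
  hence "(\<Sum>L\<in>Lists. fact (N - length L) ^ 2 :: nat)
      = (\<Sum>j=1..N. \<Sum>L\<in>{L \<in> Lists. length L = j}. fact (N - length L) ^ 2)"
    by (intro sum.group[symmetric] \<open>finite Lists\<close>) simp
  also have "\<dots> = (\<Sum>j=1..N. fact N * fact (N - j))"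
  proof (rule sum.cong[OF refl])
    fix j assume j: "j \<in> {1..N}"
    have "{L \<in> Lists. length L = j} = {L. length L = j \<and> distinct L \<and> set L \<subseteq> A}"
      using j by (auto simp: Lists_def)
    hence "card {L \<in> Lists. length L = j} = \<Prod>{Suc (N - j)..N}"
      using card_lists_distinct_length_eq[OF assms, of j] j by (simp add: N_def Suc_diff_le)
    moreover have "fact N = fact (N - j) * \<Prod>{Suc (N - j)..N}"
      by (rule fact_eq_fact_times) simp
    ultimately show "(\<Sum>L\<in>{L \<in> Lists. length L = j}. fact (N - length L) ^ 2 :: nat)
        = fact N * fact (N - j)"
      by (simp add: power2_eq_square)
  qed
  also have "\<dots> = fact N * (\<Sum>i<N. fact i)"
  proof -
    have "{1..N} = Suc ` {..<N}" by (simp add: image_Suc_lessThan)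
    hence "(\<Sum>j=1..N. fact (N - j) :: nat) = (\<Sum>i<N. fact (N - Suc i))"
      by (simp add: sum.reindex)
    also have "\<dots> = (\<Sum>i<N. fact i)" by (rule sum.nat_diff_reindex)
    finally show ?thesis by (simp add: sum_distrib_left[symmetric])
  qed
  finally show ?thesis by (simp add: Lists_def N_def)
qed

lemma sum_fact_le: "(\<Sum>i<k. fact i :: nat) \<le> fact k"
proof (induction k)
  case (Suc k)
  show ?case
  proof (cases "k = 0")
    case False
    have "(\<Sum>i<Suc k. fact i :: nat) \<le> 2 * fact k" using Suc.IH by simp
    also have "\<dots> \<le> Suc k * fact k" using False by (intro mult_le_mono1) simp
    finally show ?thesis by simp
  qed simp
qed simp

lemma derangement_centralizer_sum_rec:
  assumes "finite S" and "x \<in> S"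
    and IH: "\<And>T. T \<subset> S \<Longrightarrow> derangement_centralizer_sum T \<le> fact (card T) ^ 2"
  shows "derangement_centralizer_sum S
    \<le> card S ^ 2 * (fact (card S - 1) * (\<Sum>i<card S - 1. fact i))"
proof -
  let ?A = "S - {x}"
  have "derangement_centralizer_sum S
      \<le> (\<Sum>L | L \<noteq> [] \<and> distinct L \<and> set L \<subseteq> ?A.
            card S ^ 2 * derangement_centralizer_sum (S - insert x (set L)))"
    by (rule derangement_centralizer_sum_le_cycle_sum[OF assms(1,2)])
  also have "\<dots> \<le> (\<Sum>L | L \<noteq> [] \<and> distinct L \<and> set L \<subseteq> ?A.
            card S ^ 2 * fact (card ?A - length L) ^ 2)"
  proof (rule sum_mono)
    fix L assume L: "L \<in> {L. L \<noteq> [] \<and> distinct L \<and> set L \<subseteq> ?A}"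
    have "S - insert x (set L) = ?A - set L" by auto
    hence "card (S - insert x (set L)) = card ?A - length L"
      using L assms(1) by (simp add: card_Diff_subset distinct_card)
    moreover have "S - insert x (set L) \<subset> S" using assms(2) by auto
    ultimately show "card S ^ 2 * derangement_centralizer_sum (S - insert x (set L))
        \<le> card S ^ 2 * fact (card ?A - length L) ^ 2"
      using IH by (metis mult_le_mono2)
  qed
  also have "\<dots> = card S ^ 2 * (fact (card ?A) * (\<Sum>i<card ?A. fact i))"
    using sum_fact_sq_distinct_lists[of ?A] assms(1) by (simp flip: sum_distrib_left)
  finally show ?thesis using assms by simp
qed

lemma derangement_centralizer_sum_le:
  "finite S \<Longrightarrow> derangement_centralizer_sum S \<le> fact (card S) ^ 2"
proof (induction S rule: finite_psubset_induct)
  case (psubset S)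
  show ?case
  proof (cases "S = {}")
    case True
    thus ?thesis
      by (simp add: derangement_centralizer_sum_def derangements_def centralizer_def)
  next
    case False
    then obtain x where x: "x \<in> S" by blast
    define m where "m = card S"
    have "m \<ge> 1" using psubset.hyps x by (auto simp: m_def Suc_le_eq card_gt_0_iff)
    have "derangement_centralizer_sum S \<le> m ^ 2 * (fact (m - 1) * (\<Sum>i<m - 1. fact i))"
      unfolding m_def by (rule derangement_centralizer_sum_rec[OF psubset.hyps x psubset.IH])
    also have "\<dots> \<le> m ^ 2 * (fact (m - 1) * fact (m - 1))"
      by (intro mult_le_mono2 sum_fact_le)
    also have "\<dots> = (m * fact (m - 1)) ^ 2" by (simp add: power2_eq_square)
    also have "m * fact (m - 1) = (fact m :: nat)" using \<open>m \<ge> 1\<close> by (simp add: fact_reduce)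
    finally show ?thesis by (simp add: m_def)
  qed
qed

lemma derangement_centralizer_sum_le_decay:
  assumes "finite S" and "card S \<ge> 2"
  shows "real (derangement_centralizer_sum S) \<le> 2 * fact (card S) ^ 2 / real (card S - 1)"
proof -
  obtain m where m: "card S = Suc (Suc m)" using assms(2) by (metis add_2_eq_Suc le_Suc_ex)
  then obtain x where x: "x \<in> S" by (metis card.empty ex_in_conv nat.distinct(1))
  have IH: "derangement_centralizer_sum T \<le> fact (card T) ^ 2" if "T \<subset> S" for T
    using that assms(1) by (meson derangement_centralizer_sum_le finite_subset psubset_imp_subset)
  have "derangement_centralizer_sum S
      \<le> card S ^ 2 * (fact (card S - 1) * (\<Sum>i<card S - 1. fact i))"
    by (rule derangement_centralizer_sum_rec[OF assms(1) x IH])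
  also have "\<dots> \<le> card S ^ 2 * (fact (Suc m) * (2 * fact m))"
    using sum_fact_le[of m] m by simp
  finally have "(card S - 1) * derangement_centralizer_sum S
      \<le> (card S - 1) * (card S ^ 2 * (fact (Suc m) * (2 * fact m)))"
    by (rule mult_le_mono2)
  also have "\<dots> = 2 * fact (card S) ^ 2" using m by (simp add: power2_eq_square algebra_simps)
  finally have "real ((card S - 1) * derangement_centralizer_sum S) \<le> real (2 * fact (card S) ^ 2)"
    by (simp only: of_nat_le_iff)
  thus ?thesis using m by (simp add: field_simps)
qed

section \<open>The sum of the squared centraliser orders\<close>

lemma perm_restrict_permutes:
  assumes "s permutes U" and "\<And>y. s y \<in> T \<longleftrightarrow> y \<in> T"
  shows "perm_restrict s T permutes T"
proof (rule bij_imp_permutes)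
  have "inj_on s T" using permutes_inj[OF assms(1)] by (rule inj_on_subset) simp
  hence "inj_on (perm_restrict s T) T"
    by (rule inj_on_cong[THEN iffD1, rotated]) (simp add: perm_restrict_simps)
  moreover have "perm_restrict s T ` T = T"
  proof
    show "perm_restrict s T ` T \<subseteq> T" using assms(2) by (auto simp: perm_restrict_simps)
    show "T \<subseteq> perm_restrict s T ` T"
    proof
      fix y assume y: "y \<in> T"
      have "s (inv s y) = y" using permutes_inverses(1)[OF assms(1)] by simp
      hence "inv s y \<in> T" using assms(2) y by metis
      thus "y \<in> perm_restrict s T ` T" using \<open>s (inv s y) = y\<close>
        by (metis image_eqI perm_restrict_simps(1))
    qed
  qed
  ultimately show "bij_betw (perm_restrict s T) T T" by (simp add: bij_betw_def)
qed (simp add: perm_restrict_simps)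

lemma centralizer_preserves_support:
  assumes "s \<in> centralizer U p"
  shows "p (s y) \<noteq> s y \<longleftrightarrow> p y \<noteq> y"
proof -
  have "p (s y) = s (p y)" using assms by (auto simp: centralizer_def fun_eq_iff)
  moreover have "inj s" using assms by (auto simp: centralizer_def permutes_inj)
  ultimately show ?thesis by (metis injD)
qed

lemma perm_restrict_support_in_centralizer:
  assumes "s \<in> centralizer U p" and "p permutes U"
  shows "perm_restrict s {y. p y \<noteq> y} \<in> centralizer {y. p y \<noteq> y} p"
proof -
  let ?S = "{y. p y \<noteq> y}"
  have "s permutes U" using assms(1) by (simp add: centralizer_def)
  hence "perm_restrict s ?S permutes ?S"
    using centralizer_preserves_support[OF assms(1)] by (intro perm_restrict_permutes) auto
  moreover have "perm_restrict s ?S \<circ> p = p \<circ> perm_restrict s ?S"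
  proof
    fix y
    have "p (p y) \<noteq> p y" if "p y \<noteq> y"
      using that permutes_inj[OF assms(2)] by (auto dest: injD)
    moreover have "s (p y) = p (s y)" using assms(1) by (auto simp: centralizer_def fun_eq_iff)
    ultimately show "(perm_restrict s ?S \<circ> p) y = (p \<circ> perm_restrict s ?S) y"
      by (cases "p y = y") (auto simp: perm_restrict_simps)
  qed
  ultimately show ?thesis by (simp add: centralizer_def)
qed

text \<open>A permutation commuting with \<open>p\<close> restricts to a permutation of the support of \<open>p\<close>
  commuting with \<open>p\<close> and to an arbitrary permutation of the fixed points of \<open>p\<close>.\<close>

lemma card_centralizer_le_support:
  assumes "p permutes U" and "finite U"
  shows "card (centralizer U p)
    \<le> card (centralizer {y. p y \<noteq> y} p) * fact (card U - card {y. p y \<noteq> y})"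
proof -
  let ?S = "{y. p y \<noteq> y}"
  define f where "f s = (perm_restrict s ?S, perm_restrict s (U - ?S))" for s
  have "?S \<subseteq> U" using assms(1) by (auto simp: permutes_def)
  have "inj_on f (centralizer U p)"
  proof (rule inj_onI, rule ext)
    fix s1 s2 y
    assume s1: "s1 \<in> centralizer U p" and s2: "s2 \<in> centralizer U p" and "f s1 = f s2"
    hence "perm_restrict s1 ?S y = perm_restrict s2 ?S y"
      and "perm_restrict s1 (U - ?S) y = perm_restrict s2 (U - ?S) y"
      by (auto simp: f_def)
    moreover have "y \<notin> U \<Longrightarrow> s1 y = y" and "y \<notin> U \<Longrightarrow> s2 y = y"
      using s1 s2 by (auto simp: centralizer_def permutes_not_in)
    ultimately show "s1 y = s2 y" by (auto simp: perm_restrict_def split: if_splits)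
  qed
  moreover have "f ` centralizer U p \<subseteq> centralizer ?S p \<times> {q. q permutes (U - ?S)}"
  proof (rule image_subsetI)
    fix s assume s: "s \<in> centralizer U p"
    hence "s permutes U" by (simp add: centralizer_def)
    moreover have "s y \<in> U - ?S \<longleftrightarrow> y \<in> U - ?S" for y
      using centralizer_preserves_support[OF s, of y] permutes_in_image[OF \<open>s permutes U\<close>, of y]
      by auto
    ultimately have "perm_restrict s (U - ?S) permutes (U - ?S)" by (rule perm_restrict_permutes)
    thus "f s \<in> centralizer ?S p \<times> {q. q permutes (U - ?S)}"
      using perm_restrict_support_in_centralizer[OF s assms(1)] by (simp add: f_def)
  qed
  moreover have "finite (centralizer ?S p \<times> {q. q permutes (U - ?S)})"
    using assms(2) \<open>?S \<subseteq> U\<close>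
    by (intro finite_cartesian_product finite_centralizer finite_permutations)
       (auto intro: finite_subset)
  ultimately have "card (centralizer U p) \<le> card (centralizer ?S p \<times> {q. q permutes (U - ?S)})"
    by (rule card_inj_on_le)
  also have "\<dots> = card (centralizer ?S p) * fact (card U - card ?S)"
    using assms(2) \<open>?S \<subseteq> U\<close>
    by (simp add: card_cartesian_product card_permutations card_Diff_subset finite_subset)
  finally show ?thesis .
qed

lemma two_le_card_support:
  assumes "p permutes U" and "finite U" and "p \<noteq> id"
  shows "2 \<le> card {y. p y \<noteq> y}"
proof -
  obtain x where x: "p x \<noteq> x" using assms(3) by (auto simp: fun_eq_iff)
  hence "p (p x) \<noteq> p x" using permutes_inj[OF assms(1)] by (auto dest: injD)
  hence "{x, p x} \<subseteq> {y. p y \<noteq> y}" using x by auto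
  moreover have "finite {y. p y \<noteq> y}"
    using assms(1,2) by (auto simp: permutes_def intro: finite_subset)
  ultimately have "card {x, p x} \<le> card {y. p y \<noteq> y}" by (simp add: card_mono)
  thus ?thesis using x by simp
qed

lemma sum_centralizer_sq_le_supports:
  assumes "finite U"
  shows "(\<Sum>p\<in>{p. p permutes U} - {id}. card (centralizer U p) ^ 2)
    \<le> (\<Sum>S | S \<subseteq> U \<and> 2 \<le> card S. fact (card U - card S) ^ 2 * derangement_centralizer_sum S)"
proof -
  let ?P = "{p. p permutes U} - {id}" and ?supp = "\<lambda>p. {y. p y \<noteq> y}"
  have "(\<Sum>p\<in>?P. card (centralizer U p) ^ 2)
      = (\<Sum>S | S \<subseteq> U \<and> 2 \<le> card S. \<Sum>p\<in>{p \<in> ?P. ?supp p = S}. card (centralizer U p) ^ 2)"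
  proof (rule sum.group[symmetric])
    show "finite ?P" using finite_permutations[OF assms] by simp
    show "finite {S. S \<subseteq> U \<and> 2 \<le> card S}" using assms by simp
    show "?supp ` ?P \<subseteq> {S. S \<subseteq> U \<and> 2 \<le> card S}"
      using two_le_card_support[OF _ assms] by (auto simp: permutes_def)
  qed
  also have "\<dots> \<le> (\<Sum>S | S \<subseteq> U \<and> 2 \<le> card S.
      fact (card U - card S) ^ 2 * derangement_centralizer_sum S)"
  proof (rule sum_mono)
    fix S assume S: "S \<in> {S. S \<subseteq> U \<and> 2 \<le> card S}"
    have "(\<Sum>p\<in>{p \<in> ?P. ?supp p = S}. card (centralizer U p) ^ 2)
        \<le> (\<Sum>p\<in>{p \<in> ?P. ?supp p = S}. fact (card U - card S) ^ 2 * card (centralizer S p) ^ 2)"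
    proof (rule sum_mono)
      fix p assume p: "p \<in> {p \<in> ?P. ?supp p = S}"
      hence "card (centralizer U p) \<le> card (centralizer S p) * fact (card U - card S)"
        using card_centralizer_le_support[of p U] assms by auto
      hence "card (centralizer U p) ^ 2 \<le> (card (centralizer S p) * fact (card U - card S)) ^ 2"
        by (rule power_mono) simp
      thus "card (centralizer U p) ^ 2 \<le> fact (card U - card S) ^ 2 * card (centralizer S p) ^ 2"
        by (simp add: power_mult_distrib mult.commute)
    qed
    also have "\<dots> \<le> (\<Sum>d\<in>derangements S. fact (card U - card S) ^ 2 * card (centralizer S d) ^ 2)"
    proof (rule sum_mono2)
      show "finite (derangements S)"
        using S assms by (intro finite_derangements) (auto intro: finite_subset)
      show "{p \<in> ?P. ?supp p = S} \<subseteq> derangements S"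
        by (auto simp: derangements_def permutes_def)
    qed simp
    also have "\<dots> = fact (card U - card S) ^ 2 * derangement_centralizer_sum S"
      by (simp add: derangement_centralizer_sum_def sum_distrib_left)
    finally show "(\<Sum>p\<in>{p \<in> ?P. ?supp p = S}. card (centralizer U p) ^ 2)
        \<le> fact (card U - card S) ^ 2 * derangement_centralizer_sum S" .
  qed
  finally show ?thesis .
qed

lemma mult_pred_le_binomial:
  fixes n m :: nat
  assumes "2 \<le> m" and "m < n"
  shows "n * (n - 1) \<le> 2 * ((m - 1) * (n choose m))"
proof (cases "m = n - 1")
  case True
  have "n choose m = n" using True assms(2) binomial_symmetric[of 1 n] by simp
  have "n - 1 \<le> 2 * (m - 1)" using True assms(1) by linarith
  hence "n * (n - 1) \<le> n * (2 * (m - 1))" by (rule mult_le_mono2)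
  thus ?thesis using \<open>n choose m = n\<close> by (simp add: algebra_simps)
next
  case False
  have "n choose 2 \<le> n choose m"
  proof (cases "2 * m \<le> n")
    case True thus ?thesis using assms(1) by (intro binomial_mono) auto
  next
    case False
    have "n choose 2 \<le> n choose (n - m)"
      using False \<open>m \<noteq> n - 1\<close> assms(2) by (intro binomial_mono) auto
    also have "\<dots> = n choose m" using assms(2) by (intro binomial_symmetric[symmetric]) simp
    finally show ?thesis .
  qed
  moreover have "n * (n - 1) = 2 * (n choose 2)"
  proof -
    have "even (n * (n - 1))" by (cases "even n") auto
    thus ?thesis by (simp add: choose_two)
  qed
  ultimately have "n * (n - 1) \<le> 2 * (n choose m)" by simp
  also have "\<dots> \<le> 2 * ((m - 1) * (n choose m))"
  proof -
    have "1 \<le> m - 1" using assms(1) by linarith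
    from mult_le_mono1[OF this, of "n choose m"] show ?thesis by simp
  qed
  finally show ?thesis .
qed

lemma sum_inverse_binomial_le:
  assumes "n \<ge> 2"
  shows "(\<Sum>m=2..n. 2 / (real (m - 1) * real (n choose m))) \<le> 10 / real (n - 1)"
proof -
  define a where "a = 4 / (real n * real (n - 1))"
  have term_le: "2 / (real (m - 1) * real (n choose m)) \<le> a + (if m = n then 2 / real (n - 1) else 0)"
    if m: "m \<in> {2..n}" for m
  proof (cases "m = n")
    case False
    have "real (n * (n - 1)) \<le> real (2 * ((m - 1) * (n choose m)))"
      using mult_pred_le_binomial[of m n] False m by (simp only: of_nat_le_iff) auto
    hence "real n * real (n - 1) \<le> 2 * (real (m - 1) * real (n choose m))" by simp
    moreover have "real (m - 1) * real (n choose m) > 0" using m by simp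
    moreover have "real n * real (n - 1) > 0" using assms by simp
    ultimately have "4 / (2 * (real (m - 1) * real (n choose m))) \<le> a"
      unfolding a_def by (intro divide_left_mono) (simp_all only: mult_pos_pos zero_less_numeral)
    thus ?thesis using False by (simp add: ac_simps)
  qed (use assms in \<open>simp add: a_def\<close>)
  have "(\<Sum>m=2..n. 2 / (real (m - 1) * real (n choose m)))
      \<le> (\<Sum>m=2..n. a + (if m = n then 2 / real (n - 1) else 0))"
    by (rule sum_mono) (rule term_le)
  also have "\<dots> = real (n - 1) * a + 2 / real (n - 1)"
    using assms by (simp add: sum.distrib Suc_diff_le)
  also have "\<dots> \<le> 8 / real (n - 1) + 2 / real (n - 1)"
  proof -
    have "real (n - 1) > 0" using assms by simp
    hence "real (n - 1) * a = 4 / real n" by (simp add: a_def del: of_nat_diff)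
    also have "\<dots> \<le> 8 / real (n - 1)" using assms by (simp add: frac_le)
    finally show ?thesis by simp
  qed
  finally show ?thesis by (simp add: add_divide_distrib[symmetric])
qed

lemma sum_subsets_card_ge_two:
  fixes f :: "nat \<Rightarrow> 'a::comm_semiring_1"
  assumes "finite U"
  shows "(\<Sum>S | S \<subseteq> U \<and> 2 \<le> card S. f (card S)) = (\<Sum>m=2..card U. of_nat (card U choose m) * f m)"
proof -
  have "(\<Sum>S | S \<subseteq> U \<and> 2 \<le> card S. f (card S))
      = (\<Sum>m=2..card U. \<Sum>S\<in>{S \<in> {S. S \<subseteq> U \<and> 2 \<le> card S}. card S = m}. f (card S))"
    using assms by (intro sum.group[symmetric]) (auto simp: card_mono)
  also have "\<dots> = (\<Sum>m=2..card U. of_nat (card U choose m) * f m)"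
  proof (rule sum.cong[OF refl])
    fix m assume "m \<in> {2..card U}"
    hence "{S \<in> {S. S \<subseteq> U \<and> 2 \<le> card S}. card S = m} = {S. S \<subseteq> U \<and> card S = m}" by auto
    thus "(\<Sum>S\<in>{S \<in> {S. S \<subseteq> U \<and> 2 \<le> card S}. card S = m}. f (card S))
        = of_nat (card U choose m) * f m"
      using n_subsets[OF assms, of m] by simp
  qed
  finally show ?thesis .
qed

lemma sum_centralizer_sq_le:
  assumes "finite U" and "card U \<ge> 2"
  shows "real (\<Sum>p\<in>{p. p permutes U} - {id}. card (centralizer U p) ^ 2)
    \<le> 10 * fact (card U) ^ 2 / real (card U - 1)"
proof -
  define n where "n = card U"
  let ?Big = "{S. S \<subseteq> U \<and> 2 \<le> card S}"
  have "real (\<Sum>p\<in>{p. p permutes U} - {id}. card (centralizer U p) ^ 2)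
      \<le> (\<Sum>S\<in>?Big. real (fact (n - card S) ^ 2 * derangement_centralizer_sum S))"
    unfolding n_def of_nat_sum[symmetric] of_nat_le_iff
    by (rule sum_centralizer_sq_le_supports[OF assms(1)])
  also have "\<dots> \<le> (\<Sum>S\<in>?Big. 2 * fact (n - card S) ^ 2 * fact (card S) ^ 2 / real (card S - 1))"
  proof (rule sum_mono)
    fix S assume "S \<in> ?Big"
    hence "finite S" and "2 \<le> card S" using finite_subset[OF _ assms(1)] by auto
    hence "real (derangement_centralizer_sum S) \<le> 2 * fact (card S) ^ 2 / real (card S - 1)"
      by (rule derangement_centralizer_sum_le_decay)
    hence "fact (n - card S) ^ 2 * real (derangement_centralizer_sum S)
        \<le> fact (n - card S) ^ 2 * (2 * fact (card S) ^ 2 / real (card S - 1))"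
      by (rule mult_left_mono) simp
    thus "real (fact (n - card S) ^ 2 * derangement_centralizer_sum S)
        \<le> 2 * fact (n - card S) ^ 2 * fact (card S) ^ 2 / real (card S - 1)"
      by (simp add: ac_simps)
  qed
  also have "\<dots> = (\<Sum>m=2..n. real (n choose m) * (2 * fact (n - m) ^ 2 * fact m ^ 2 / real (m - 1)))"
    unfolding n_def by (rule sum_subsets_card_ge_two[OF assms(1)])
  also have "\<dots> = fact n ^ 2 * (\<Sum>m=2..n. 2 / (real (m - 1) * real (n choose m)))"
    unfolding sum_distrib_left
  proof (rule sum.cong[OF refl])
    fix m assume m: "m \<in> {2..n}"
    have "fact n = fact m * fact (n - m) * real (n choose m)"
      using binomial_fact_lemma[of m n] m by (metis atLeastAtMost_iff of_nat_fact of_nat_mult)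
    moreover have "real (n choose m) > 0" and "real (m - 1) > 0" using m by auto
    ultimately show "real (n choose m) * (2 * fact (n - m) ^ 2 * fact m ^ 2 / real (m - 1))
        = fact n ^ 2 * (2 / (real (m - 1) * real (n choose m)))"
      by (simp add: field_simps power2_eq_square)
  qed
  also have "\<dots> \<le> fact n ^ 2 * (10 / real (n - 1))"
    using assms(2) by (intro mult_left_mono sum_inverse_binomial_le) (simp_all add: n_def)
  finally show ?thesis by (simp add: n_def mult.commute)
qed

section \<open>Signed permutation matrices\<close>

definition signed_perm_mat :: "nat \<Rightarrow> (nat \<Rightarrow> nat) \<Rightarrow> nat set \<Rightarrow> nat \<Rightarrow> nat \<Rightarrow> int" where
  "signed_perm_mat n s E = (\<lambda>i j. if i < n \<and> j < n \<and> i = s j then (if j \<in> E then -1 else 1) else 0)"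

lemma signed_perm_mat_in_Bn:
  assumes sp: "s permutes {..<n}"
  shows "signed_perm_mat n s E \<in> Bn n"
proof -
  have a: "\<exists>!j. j < n \<and> signed_perm_mat n s E i j \<noteq> 0" if i: "i < n" for i
  proof
    have "s (inv s i) = i" using permutes_inverses(1)[OF sp] by simp
    moreover have "inv s i < n" using permutes_in_image[OF permutes_inv[OF sp]] i by simp
    ultimately show "inv s i < n \<and> signed_perm_mat n s E i (inv s i) \<noteq> 0" using i by (simp add: signed_perm_mat_def)
  next
    fix j assume "j < n \<and> signed_perm_mat n s E i j \<noteq> 0"
    hence "i = s j" by (simp add: signed_perm_mat_def split: if_splits)
    thus "j = inv s i" using permutes_inverses(2)[OF sp] by simp
  qed
  have b: "\<exists>!i. i < n \<and> signed_perm_mat n s E i j \<noteq> 0" if j: "j < n" for j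
  proof
    show "s j < n \<and> signed_perm_mat n s E (s j) j \<noteq> 0" using j permutes_in_image[OF sp] by (simp add: signed_perm_mat_def)
  next
    fix i assume "i < n \<and> signed_perm_mat n s E i j \<noteq> 0"
    thus "i = s j" by (simp add: signed_perm_mat_def split: if_splits)
  qed
  show ?thesis unfolding Bn_def using a b by (auto simp: signed_perm_mat_def)
qed

lemma Bn_column_perm:
  assumes "A \<in> Bn n"
  obtains s where "s permutes {..<n}" and "\<And>j. j < n \<Longrightarrow> A (s j) j \<noteq> 0"
proof -
  have row: "\<And>i. i < n \<Longrightarrow> \<exists>!j. j < n \<and> A i j \<noteq> 0"
    and col: "\<And>j. j < n \<Longrightarrow> \<exists>!i. i < n \<and> A i j \<noteq> 0"
    using assms unfolding Bn_def by blast+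
  define s where "s j = (if j < n then (THE i. i < n \<and> A i j \<noteq> 0) else j)" for j
  have s: "s j < n \<and> A (s j) j \<noteq> 0" if "j < n" for j
    using theI'[OF col[OF that]] that by (simp add: s_def)
  have "inj_on s {..<n}"
  proof (rule inj_onI)
    fix j1 j2 assume "j1 \<in> {..<n}" and "j2 \<in> {..<n}" and "s j1 = s j2"
    thus "j1 = j2" using s[of j1] s[of j2] row[of "s j1"] by auto
  qed
  moreover have "s ` {..<n} \<subseteq> {..<n}" using s by auto
  ultimately have "s ` {..<n} = {..<n}" by (intro endo_inj_surj) simp_all
  with \<open>inj_on s {..<n}\<close> have "s permutes {..<n}"
    by (intro bij_imp_permutes) (simp_all add: bij_betw_def s_def)
  thus ?thesis using s that by blast
qed

lemma Bn_imp_signed_perm_mat: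
  assumes "A \<in> Bn n"
  shows "\<exists>s E. s permutes {..<n} \<and> E \<subseteq> {..<n} \<and> A = signed_perm_mat n s E"
proof -
  have zero: "\<And>i j. n \<le> i \<or> n \<le> j \<Longrightarrow> A i j = 0" and entries: "\<And>i j. A i j \<in> {-1, 0, 1}"
    and col: "\<And>j. j < n \<Longrightarrow> \<exists>!i. i < n \<and> A i j \<noteq> 0"
    using assms unfolding Bn_def by blast+
  obtain s where sp: "s permutes {..<n}" and s: "\<And>j. j < n \<Longrightarrow> A (s j) j \<noteq> 0"
    using Bn_column_perm[OF assms] by blast
  have off: "A i j = 0" if "i < n" "j < n" "i \<noteq> s j" for i j
    using col[OF that(2)] s[OF that(2)] permutes_in_image[OF sp, of j] that by auto
  define E where "E = {j. j < n \<and> A (s j) j = -1}"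
  have "A = signed_perm_mat n s E"
  proof (intro ext)
    fix i j
    show "A i j = signed_perm_mat n s E i j"
      using zero[of i j] off[of i j] entries[of i j] s[of j]
      by (cases "i < n \<and> j < n") (auto simp: signed_perm_mat_def E_def)
  qed
  moreover have "E \<subseteq> {..<n}" by (auto simp: E_def)
  ultimately show ?thesis using sp by blast
qed

lemma inj_on_signed_perm_mat:
  "inj_on (\<lambda>(s, E). signed_perm_mat n s E) ({s. s permutes {..<n}} \<times> Pow {..<n})"
proof (rule inj_onI, clarify)
  fix s1 E1 s2 E2
  assume p1: "s1 permutes {..<n}" and p2: "s2 permutes {..<n}" and e1: "E1 \<subseteq> {..<n}" and e2: "E2 \<subseteq> {..<n}"
    and eq: "signed_perm_mat n s1 E1 = signed_perm_mat n s2 E2"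
  have ss: "s1 j = s2 j" for j
  proof (cases "j < n")
    case True
    have "signed_perm_mat n s1 E1 (s1 j) j \<noteq> 0" using True permutes_in_image[OF p1] by (simp add: signed_perm_mat_def)
    hence "signed_perm_mat n s2 E2 (s1 j) j \<noteq> 0" using eq by simp
    thus ?thesis by (simp add: signed_perm_mat_def split: if_splits)
  next
    case False thus ?thesis using permutes_not_in[OF p1] permutes_not_in[OF p2] by simp
  qed
  hence s: "s1 = s2" by auto
  have "j \<in> E1 \<longleftrightarrow> j \<in> E2" for j
  proof (cases "j < n")
    case True
    have "signed_perm_mat n s1 E1 (s1 j) j = signed_perm_mat n s2 E2 (s1 j) j" using eq by simp
    thus ?thesis using True permutes_in_image[OF p1] s by (simp add: signed_perm_mat_def split: if_splits)
  next
    case False thus ?thesis using e1 e2 by auto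
  qed
  thus "s1 = s2 \<and> E1 = E2" using s by auto
qed

lemma card_neg_entries_signed_perm_mat:
  assumes sp: "s permutes {..<n}" and E: "E \<subseteq> {..<n}"
  shows "card {(i, j). i < n \<and> j < n \<and> signed_perm_mat n s E i j = -1} = card E"
proof -
  have "{(i, j). i < n \<and> j < n \<and> signed_perm_mat n s E i j = -1} = (\<lambda>j. (s j, j)) ` E"
    using E permutes_in_image[OF sp] by (auto simp: signed_perm_mat_def split: if_splits)
  moreover have "inj_on (\<lambda>j. (s j, j)) E" by (auto intro: inj_onI)
  ultimately show ?thesis by (simp add: card_image)
qed

lemma conj_act_apply:
  assumes pp: "p permutes {..<n}" and z: "\<And>i j. n \<le> i \<or> n \<le> j \<Longrightarrow> A i j = 0"
  shows "conj_act n p A = (\<lambda>i j. if i < n \<and> j < n then A (inv p i) (inv p j) else 0)"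
proof (intro ext)
  fix i j
  have ip: "inv p permutes {..<n}" using permutes_inv[OF pp] .
  have m1: "mat_mult n (perm_mat n p) A i j' = (if i < n then A (inv p i) j' else 0)" for j'
  proof (cases "i < n")
    case True
    have "mat_mult n (perm_mat n p) A i j' = (\<Sum>l<n. if l = inv p i then A l j' else 0)"
      unfolding mat_mult_def perm_mat_def
    proof (rule sum.cong[OF refl])
      fix l assume "l \<in> {..<n}"
      have "i = p l \<longleftrightarrow> l = inv p i"
        using permutes_inverses[OF pp] by metis
      thus "(if i < n \<and> l < n \<and> i = p l then 1 else 0) * A l j' = (if l = inv p i then A l j' else 0)"
        using True \<open>l \<in> {..<n}\<close> by auto
    qed
    also have "\<dots> = A (inv p i) j'"
      using permutes_in_image[OF ip] True by (simp add: sum.delta)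
    finally show ?thesis using True by simp
  next
    case False thus ?thesis by (simp add: mat_mult_def perm_mat_def)
  qed
  have "conj_act n p A i j = (\<Sum>l<n. mat_mult n (perm_mat n p) A i l * perm_mat n (inv p) l j)"
    by (simp add: conj_act_def mat_mult_def)
  also have "\<dots> = (\<Sum>l<n. if l = inv p j \<and> j < n then mat_mult n (perm_mat n p) A i l else 0)"
    by (rule sum.cong[OF refl]) (auto simp: perm_mat_def)
  also have "\<dots> = (if j < n then mat_mult n (perm_mat n p) A i (inv p j) else 0)"
  proof (cases "j < n")
    case True thus ?thesis using permutes_in_image[OF ip] by (simp add: sum.delta)
  next
    case False thus ?thesis by simp
  qed
  also have "\<dots> = (if i < n \<and> j < n then A (inv p i) (inv p j) else 0)"
    using m1 by simp
  finally show "conj_act n p A i j = (if i < n \<and> j < n then A (inv p i) (inv p j) else 0)" .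
qed

lemma conj_act_id:
  assumes "A \<in> Bn n"
  shows "conj_act n id A = A"
proof -
  have z: "\<And>i j. n \<le> i \<or> n \<le> j \<Longrightarrow> A i j = 0" using assms unfolding Bn_def by blast
  show ?thesis
  proof (intro ext)
    fix i j
    have "conj_act n id A i j = (if i < n \<and> j < n then A i j else 0)"
      using conj_act_apply[OF permutes_id z] by simp
    thus "conj_act n id A i j = A i j" using z[of i j] by (cases "i < n \<and> j < n") auto
  qed
qed

lemma conj_act_fixed_imp_commute:
  assumes pp: "p permutes {..<n}" and sp: "s permutes {..<n}"
    and fx: "conj_act n p (signed_perm_mat n s E) = signed_perm_mat n s E"
  shows "s \<circ> p = p \<circ> s"
proof
  fix b
  have z: "\<And>i j. n \<le> i \<or> n \<le> j \<Longrightarrow> signed_perm_mat n s E i j = 0" by (auto simp: signed_perm_mat_def)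
  show "(s \<circ> p) b = (p \<circ> s) b"
  proof (cases "b < n")
    case True
    have sb: "s b < n" using permutes_in_image[OF sp] True by simp
    have "p (s b) < n" "p b < n" using permutes_in_image[OF pp] sb True by auto
    have "signed_perm_mat n s E (s b) b \<noteq> 0" using True sb by (simp add: signed_perm_mat_def)
    moreover have "conj_act n p (signed_perm_mat n s E) (p (s b)) (p b) = signed_perm_mat n s E (s b) b"
      using conj_act_apply[OF pp z] \<open>p (s b) < n\<close> \<open>p b < n\<close> permutes_inverses(2)[OF pp] by simp
    ultimately have "signed_perm_mat n s E (p (s b)) (p b) \<noteq> 0" using fx by simp
    thus ?thesis by (simp add: signed_perm_mat_def split: if_splits)
  next
    case False thus ?thesis using permutes_not_in[OF pp] permutes_not_in[OF sp] by simp
  qed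
qed

lemma perm_char_id_eq_card:
  assumes "Y \<subseteq> Bn n"
  shows "perm_char n Y id = real (card Y)"
proof -
  have "{A\<in>Y. conj_act n id A = A} = Y" using assms conj_act_id by blast
  thus ?thesis by (simp add: perm_char_def)
qed

definition signed_perm_mats :: "nat \<Rightarrow> nat set set \<Rightarrow> (nat \<Rightarrow> nat \<Rightarrow> int) set" where
  "signed_perm_mats n Es = (\<lambda>(s, E). signed_perm_mat n s E) ` ({s. s permutes {..<n}} \<times> Es)"

lemma signed_perm_mats_subset_Bn: "signed_perm_mats n Es \<subseteq> Bn n"
  by (auto simp: signed_perm_mats_def signed_perm_mat_in_Bn)

lemma card_signed_perm_mats:
  assumes "Es \<subseteq> Pow {..<n}"
  shows "card (signed_perm_mats n Es) = fact n * card Es"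
proof -
  have "card (signed_perm_mats n Es) = card ({s. s permutes {..<n}} \<times> Es)"
    unfolding signed_perm_mats_def
    using assms by (intro card_image inj_on_subset[OF inj_on_signed_perm_mat]) auto
  thus ?thesis by (simp add: card_cartesian_product card_permutations)
qed

lemma Bn_eq_signed_perm_mats: "Bn n = signed_perm_mats n (Pow {..<n})"
  unfolding signed_perm_mats_def using Bn_imp_signed_perm_mat signed_perm_mat_in_Bn by fastforce

lemma Xnk_eq_signed_perm_mats: "Xnk n k = signed_perm_mats n {E. E \<subseteq> {..<n} \<and> card E = k}"
  unfolding Xnk_def Bn_eq_signed_perm_mats signed_perm_mats_def
  by (auto simp: card_neg_entries_signed_perm_mat)

lemma perm_char_signed_perm_mats_id:
  assumes "Es \<subseteq> Pow {..<n}"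
  shows "perm_char n (signed_perm_mats n Es) id = real (card Es) * fact n"
  using perm_char_id_eq_card[OF signed_perm_mats_subset_Bn] card_signed_perm_mats[OF assms]
  by simp

lemma perm_char_signed_perm_mats_le:
  assumes "p permutes {..<n}" and "Es \<subseteq> Pow {..<n}"
  shows "perm_char n (signed_perm_mats n Es) p
    \<le> real (card (centralizer {..<n} p)) * real (card Es)"
proof -
  have "finite Es" using assms(2) by (rule finite_subset) simp
  have "{A \<in> signed_perm_mats n Es. conj_act n p A = A}
      \<subseteq> (\<lambda>(s, E). signed_perm_mat n s E) ` (centralizer {..<n} p \<times> Es)"
  proof
    fix A assume "A \<in> {A \<in> signed_perm_mats n Es. conj_act n p A = A}"
    then obtain s E where s: "s permutes {..<n}" and E: "E \<in> Es"
      and A: "A = signed_perm_mat n s E" and fixed: "conj_act n p A = A"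
      by (auto simp: signed_perm_mats_def)
    have "s \<in> centralizer {..<n} p"
      using conj_act_fixed_imp_commute[OF assms(1) s] fixed A s by (simp add: centralizer_def)
    thus "A \<in> (\<lambda>(s, E). signed_perm_mat n s E) ` (centralizer {..<n} p \<times> Es)"
      using A E by blast
  qed
  hence "card {A \<in> signed_perm_mats n Es. conj_act n p A = A}
      \<le> card ((\<lambda>(s, E). signed_perm_mat n s E) ` (centralizer {..<n} p \<times> Es))"
    using \<open>finite Es\<close>
    by (intro card_mono finite_imageI finite_cartesian_product finite_centralizer) auto
  also have "\<dots> \<le> card (centralizer {..<n} p \<times> Es)"
    by (rule card_image_le) (use \<open>finite Es\<close> in \<open>auto intro: finite_centralizer\<close>)
  also have "\<dots> = card (centralizer {..<n} p) * card Es" by (simp add: card_cartesian_product)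
  finally show ?thesis by (simp add: perm_char_def flip: of_nat_mult)
qed

section \<open>Comparison with the regular character\<close>

definition char_defect :: "nat \<Rightarrow> ((nat \<Rightarrow> nat) \<Rightarrow> real) \<Rightarrow> real" where
  "char_defect n f = (\<Sum>p\<in>{p. p permutes {..<n}} - {id}. f p ^ 2) / f id ^ 2"

lemma char_defect_nonneg: "0 \<le> char_defect n f"
  by (simp add: char_defect_def sum_nonneg)

lemma sum_reg_char_mult: "(\<Sum>p | p permutes {..<n}. reg_char n p * f p) = fact n * f id"
proof -
  have "(\<Sum>p | p permutes {..<n}. reg_char n p * f p)
      = (\<Sum>p | p permutes {..<n}. if p = id then fact n * f id else 0)"
    by (rule sum.cong) (auto simp: reg_char_def)
  also have "\<dots> = fact n * f id" by (simp add: finite_permutations permutes_id)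
  finally show ?thesis .
qed

lemma char_inner_reg_char: "char_inner n (reg_char n) f = f id"
  by (simp add: char_inner_def sum_reg_char_mult)

lemma char_norm_scaled_reg_char:
  assumes "c \<ge> 0"
  shows "char_norm n (\<lambda>p. c * reg_char n p) = c * sqrt (fact n)"
proof -
  have "(\<Sum>p | p permutes {..<n}. c * reg_char n p * (c * reg_char n p))
      = (\<Sum>p | p permutes {..<n}. reg_char n p * (c ^ 2 * reg_char n p))"
    by (simp add: power2_eq_square ac_simps)
  also have "\<dots> = fact n * (c ^ 2 * fact n)"
    by (simp only: sum_reg_char_mult) (simp add: reg_char_def)
  finally have "char_inner n (\<lambda>p. c * reg_char n p) (\<lambda>p. c * reg_char n p) = c ^ 2 * fact n"
    by (simp add: char_inner_def)
  thus ?thesis using assms by (simp add: char_norm_def real_sqrt_mult)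
qed

lemma char_inner_self:
  assumes "f id \<noteq> 0"
  shows "char_inner n f f = f id ^ 2 * (1 + char_defect n f) / fact n"
proof -
  have "(\<Sum>p | p permutes {..<n}. f p * f p)
      = f id ^ 2 + (\<Sum>p\<in>{p. p permutes {..<n}} - {id}. f p ^ 2)"
    by (subst sum.remove[of _ id]) (auto simp: finite_permutations permutes_id power2_eq_square)
  thus ?thesis using assms by (simp add: char_inner_def char_defect_def field_simps)
qed

lemma char_norm_eq_defect:
  assumes "f id > 0"
  shows "char_norm n f = f id * sqrt (1 + char_defect n f) / sqrt (fact n)"
  using assms char_defect_nonneg[of n f]
  by (simp add: char_norm_def char_inner_self real_sqrt_mult real_sqrt_divide)

lemma cosine_reg_char:
  assumes "f id > 0"
  shows "char_inner n (reg_char n) f / (char_norm n (reg_char n) * char_norm n f)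
    = 1 / sqrt (1 + char_defect n f)"
  using assms char_norm_scaled_reg_char[of 1 n] char_defect_nonneg[of n f]
  by (simp add: char_inner_reg_char char_norm_eq_defect)

lemma norm_ratio_reg_char:
  assumes "c > 0" and "f id = c * fact n"
  shows "char_norm n (\<lambda>p. c * reg_char n p) / char_norm n f = 1 / sqrt (1 + char_defect n f)"
proof -
  have "sqrt (fact n) * sqrt (fact n) = (fact n :: real)" by simp
  thus ?thesis
    using assms char_defect_nonneg[of n f]
    by (simp add: char_norm_scaled_reg_char char_norm_eq_defect field_simps)
qed

lemma char_defect_signed_perm_mats_le:
  assumes "n \<ge> 2" and "Es \<subseteq> Pow {..<n}" and "Es \<noteq> {}"
  shows "char_defect n (perm_char n (signed_perm_mats n Es)) \<le> 10 / real (n - 1)"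
proof -
  let ?\<chi> = "perm_char n (signed_perm_mats n Es)"
  let ?c = "real (card Es)"
  let ?R = "\<Sum>p\<in>{p. p permutes {..<n}} - {id}. ?\<chi> p ^ 2"
  have "?c > 0" using assms(2,3) finite_subset[OF assms(2)] by (simp add: card_gt_0_iff)
  have "?R \<le> (\<Sum>p\<in>{p. p permutes {..<n}} - {id}. ?c ^ 2 * real (card (centralizer {..<n} p) ^ 2))"
  proof (rule sum_mono)
    fix p assume "p \<in> {p. p permutes {..<n}} - {id}"
    hence "?\<chi> p \<le> real (card (centralizer {..<n} p)) * ?c"
      using perm_char_signed_perm_mats_le[OF _ assms(2)] by simp
    moreover have "0 \<le> ?\<chi> p" by (simp add: perm_char_def)
    ultimately have "?\<chi> p ^ 2 \<le> (real (card (centralizer {..<n} p)) * ?c) ^ 2"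
      by (rule power_mono)
    thus "?\<chi> p ^ 2 \<le> ?c ^ 2 * real (card (centralizer {..<n} p) ^ 2)"
      by (simp add: power_mult_distrib mult.commute)
  qed
  also have "\<dots> = ?c ^ 2 * real (\<Sum>p\<in>{p. p permutes {..<n}} - {id}. card (centralizer {..<n} p) ^ 2)"
    by (simp add: sum_distrib_left)
  also have "\<dots> \<le> ?c ^ 2 * (10 * fact n ^ 2 / real (n - 1))"
    using sum_centralizer_sq_le[of "{..<n}"] assms(1) by (intro mult_left_mono) auto
  finally have "?R / (?c * fact n) ^ 2 \<le> ?c ^ 2 * (10 * fact n ^ 2 / real (n - 1)) / (?c * fact n) ^ 2"
    by (rule divide_right_mono) simp
  also have "\<dots> = 10 / real (n - 1)" using \<open>?c > 0\<close> by (simp add: field_simps power_mult_distrib)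
  finally show ?thesis
    by (simp add: char_defect_def perm_char_signed_perm_mats_id[OF assms(2)])
qed

lemma char_defect_signed_perm_mats_tendsto_zero:
  assumes "\<And>n. Es n \<subseteq> Pow {..<n}" and "\<And>n. n \<ge> 2 \<Longrightarrow> Es n \<noteq> {}"
  shows "(\<lambda>n. char_defect n (perm_char n (signed_perm_mats n (Es n)))) \<longlonglongrightarrow> 0"
proof (rule tendsto_sandwich[of "\<lambda>_. 0" _ _ "\<lambda>n. 20 / real n"])
  show "\<forall>\<^sub>F n in sequentially. char_defect n (perm_char n (signed_perm_mats n (Es n))) \<le> 20 / real n"
    using eventually_ge_at_top[of "2::nat"]
  proof eventually_elim
    case (elim n)
    have "char_defect n (perm_char n (signed_perm_mats n (Es n))) \<le> 10 / real (n - 1)"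
      using elim assms by (intro char_defect_signed_perm_mats_le) auto
    also have "\<dots> \<le> 20 / real n" using elim by (simp add: field_simps of_nat_diff)
    finally show ?case .
  qed
qed (simp_all add: char_defect_nonneg lim_const_over_n)

lemma tendsto_signed_perm_mats:
  assumes "\<And>n. Es n \<subseteq> Pow {..<n}" and "\<And>n. n \<ge> 2 \<Longrightarrow> Es n \<noteq> {}"
  shows "(\<lambda>n. char_norm n (\<lambda>p. real (card (Es n)) * reg_char n p)
      / char_norm n (perm_char n (signed_perm_mats n (Es n)))) \<longlonglongrightarrow> 1"
    and "(\<lambda>n. char_inner n (reg_char n) (perm_char n (signed_perm_mats n (Es n)))
      / (char_norm n (reg_char n) * char_norm n (perm_char n (signed_perm_mats n (Es n))))) \<longlonglongrightarrow> 1"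
proof -
  define e where "e n = char_defect n (perm_char n (signed_perm_mats n (Es n)))" for n
  have "(\<lambda>n. 1 / sqrt (1 + e n)) \<longlonglongrightarrow> 1 / sqrt (1 + 0)"
    unfolding e_def
    by (intro tendsto_intros char_defect_signed_perm_mats_tendsto_zero assms) simp_all
  hence lim: "(\<lambda>n. 1 / sqrt (1 + e n)) \<longlonglongrightarrow> 1" by simp
  have card_pos: "real (card (Es n)) > 0" if "n \<ge> 2" for n
    using assms(2)[OF that] finite_subset[OF assms(1)[of n]] by (simp add: card_gt_0_iff)
  have char_id: "perm_char n (signed_perm_mats n (Es n)) id = real (card (Es n)) * fact n" for n
    by (rule perm_char_signed_perm_mats_id[OF assms(1)])
  have "char_norm n (\<lambda>p. real (card (Es n)) * reg_char n p)
      / char_norm n (perm_char n (signed_perm_mats n (Es n))) = 1 / sqrt (1 + e n)"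
    if "n \<ge> 2" for n
    unfolding e_def using card_pos[OF that] by (intro norm_ratio_reg_char) (simp_all add: char_id)
  thus "(\<lambda>n. char_norm n (\<lambda>p. real (card (Es n)) * reg_char n p)
      / char_norm n (perm_char n (signed_perm_mats n (Es n)))) \<longlonglongrightarrow> 1"
    by (intro Lim_transform_eventually[OF lim] eventually_mono[OF eventually_ge_at_top[of 2]]) simp
  have "char_inner n (reg_char n) (perm_char n (signed_perm_mats n (Es n)))
      / (char_norm n (reg_char n) * char_norm n (perm_char n (signed_perm_mats n (Es n))))
      = 1 / sqrt (1 + e n)"
    if "n \<ge> 2" for n
    unfolding e_def using card_pos[OF that] by (intro cosine_reg_char) (simp add: char_id)
  thus "(\<lambda>n. char_inner n (reg_char n) (perm_char n (signed_perm_mats n (Es n)))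
      / (char_norm n (reg_char n) * char_norm n (perm_char n (signed_perm_mats n (Es n))))) \<longlonglongrightarrow> 1"
    by (intro Lim_transform_eventually[OF lim] eventually_mono[OF eventually_ge_at_top[of 2]]) simp
qed

theorem mainTheorem19:
  fixes k :: "nat \<Rightarrow> nat"
  assumes "\<forall>n\<ge>1. k n < n"
    and "(\<exists>M. \<forall>n. k n \<le> M) \<or> filterlim k at_top sequentially"
  shows "((\<lambda>n. char_norm n (\<lambda>\<pi>. real (n choose k n) * reg_char n \<pi>)
               / char_norm n (perm_char n (Xnk n (k n)))) \<longlonglongrightarrow> 1)
    \<and> ((\<lambda>n. char_norm n (\<lambda>\<pi>. 2 ^ n * reg_char n \<pi>)
               / char_norm n (perm_char n (Bn n))) \<longlonglongrightarrow> 1)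
    \<and> ((\<lambda>n. char_inner n (reg_char n) (perm_char n (Xnk n (k n)))
               / (char_norm n (reg_char n) * char_norm n (perm_char n (Xnk n (k n))))) \<longlonglongrightarrow> 1)
    \<and> ((\<lambda>n. char_inner n (reg_char n) (perm_char n (Bn n))
               / (char_norm n (reg_char n) * char_norm n (perm_char n (Bn n)))) \<longlonglongrightarrow> 1)"
proof -
  define Ek where "Ek n = {E. E \<subseteq> {..<n} \<and> card E = k n}" for n
  have "{..<k n} \<in> Ek n" if "n \<ge> 2" for n
  proof -
    have "k n < n" using assms(1) that by simp
    thus ?thesis by (auto simp: Ek_def)
  qed
  hence "Ek n \<noteq> {}" if "n \<ge> 2" for n using that by blast
  moreover have "Ek n \<subseteq> Pow {..<n}" for n by (auto simp: Ek_def)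
  moreover have "real (card (Ek n)) = real (n choose k n)" for n by (simp add: Ek_def n_subsets)
  moreover have "Xnk n (k n) = signed_perm_mats n (Ek n)" for n
    unfolding Ek_def by (rule Xnk_eq_signed_perm_mats)
  ultimately have X: "(\<lambda>n. char_norm n (\<lambda>\<pi>. real (n choose k n) * reg_char n \<pi>)
               / char_norm n (perm_char n (Xnk n (k n)))) \<longlonglongrightarrow> 1"
    "(\<lambda>n. char_inner n (reg_char n) (perm_char n (Xnk n (k n)))
               / (char_norm n (reg_char n) * char_norm n (perm_char n (Xnk n (k n))))) \<longlonglongrightarrow> 1"
    using tendsto_signed_perm_mats[of Ek] by simp_all
  have "real (card (Pow {..<n})) = 2 ^ n" for n by (simp add: card_Pow)
  moreover note tendsto_signed_perm_mats[of "\<lambda>n. Pow {..<n}", OF order_refl Pow_not_empty]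
  ultimately have B: "(\<lambda>n. char_norm n (\<lambda>\<pi>. 2 ^ n * reg_char n \<pi>)
               / char_norm n (perm_char n (Bn n))) \<longlonglongrightarrow> 1"
    "(\<lambda>n. char_inner n (reg_char n) (perm_char n (Bn n))
               / (char_norm n (reg_char n) * char_norm n (perm_char n (Bn n)))) \<longlonglongrightarrow> 1"
    by (simp_all add: Bn_eq_signed_perm_mats)
  show ?thesis using X B by blast
qed

end
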